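(* Let $k,l\ge m>1$ be integers. There exist mutually unbiased equiangular tight frames $(v_1,\dots,v_k)$ and $(w_1,\dots,w_l)$ for $\mathbb{R}^m$ if and only if there exists a matrix $X\in\mathbb{R}^{k\times l}$ such that: (i) $X_{ij}\in\{-1,+1\}$ for all $i,j$; (ii) $XX^\top X=aX$ for some $a\in\mathbb{R}$; (iii) $|XX^\top|_{i,i'}$ is constant over all $i\neq i'$; (iv) $|X^\top X|_{j,j'}$ is constant over all $j\ne j'$; (v) $X$ has rank $m$. Moreover, when this occurs, the quantities $$\frac{kl}{m},\qquad k\sqrt{\frac{l-m}{m(l-1)}},\qquad l\sqrt{\frac{k-m}{m(k-1)}}$$ are all integers.
   Context: A system of unit vectors $(v_1,\dots,v_n)$ in $\mathbb{R}^m$ is an equiangular tight frame if $|\langle v_i,v_j\rangle|$ is the same constant for all $i\ne j$ and $VV^\top=\frac{n}{m}\mathrm{I}_m$, where $V$ has columns $v_i$. Two equiangular tight frames $(v_1,\dots,v_k)$, $(w_1,\dots,w_l)$ for $\mathbb{R}^m$ are mutually unbiased if there is $c\in\mathbb{R}$ with $|\langle v_i,w_j\rangle|=c$ for all $i,j$. $|A|$ denotes the entrywise absolute value of a matrix $A$. *)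

theory Defs
  imports "HOL-Analysis.Analysis"
begin

definition synth :: "('n::finite \<Rightarrow> real^'m::finite) \<Rightarrow> real^'n^'m" where
  "synth v = (\<chi> a i. v i $ a)"

definition is_ETF :: "('n::finite \<Rightarrow> real^'m::finite) \<Rightarrow> bool" where
  "is_ETF v \<longleftrightarrow>
     (\<forall>i. norm (v i) = 1) \<and>
     (\<exists>c. \<forall>i j. i \<noteq> j \<longrightarrow> \<bar>v i \<bullet> v j\<bar> = c) \<and>
     synth v ** transpose (synth v) = (real CARD('n) / real CARD('m)) *\<^sub>R mat 1"

definition mutually_unbiased :: "('k \<Rightarrow> real^'m::finite) \<Rightarrow> ('l \<Rightarrow> real^'m) \<Rightarrow> bool" where
  "mutually_unbiased v w \<longleftrightarrow> (\<exists>c. \<forall>i j. \<bar>v i \<bullet> w j\<bar> = c)"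

end

theory Submission
  imports Defs
begin

text \<open>
  For mutually unbiased ETFs with synthesis matrices \<open>V\<close>, \<open>W\<close>, the scaled cross-Gram matrix
  \<open>X = sqrt m \<cdot> V\<^sup>T W\<close> has entries \<open>\<plusminus>1\<close>, and tightness gives \<open>X X\<^sup>T = l \<cdot> V\<^sup>T V\<close>,
  \<open>X\<^sup>T X = k \<cdot> W\<^sup>T W\<close> and \<open>X X\<^sup>T X = (k l / m) \<cdot> X\<close>. The off-diagonal Gram entries of an ETF have the
  modulus of the Welch bound, so the integrality of \<open>X X\<^sup>T\<close>, \<open>X\<^sup>T X\<close> and \<open>X X\<^sup>T X\<close> yields the
  three integers.
  Conversely, \<open>X X\<^sup>T\<close> acts as a positive scalar on the \<open>m\<close>-dimensional column space of \<open>X\<close>;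
  an isometry of that space onto \<open>\<real>\<^sup>m\<close> maps the normalised columns of \<open>X X\<^sup>T\<close> and of \<open>X\<close> to two
  equiangular tight frames whose mutual inner products are proportional to the entries of \<open>X\<close>.
\<close>

lemma column_synth [simp]: "column i (synth v) = v i"
  by (simp add: column_def synth_def vec_eq_iff)

lemma inner_column_column: "column i A \<bullet> column j B = (transpose A ** B) $ i $ j"
  by (simp add: inner_vec_def column_def transpose_def matrix_matrix_mult_def)

lemma inner_column: "column i A \<bullet> x = (transpose A *v x) $ i"
  by (simp add: inner_vec_def column_def transpose_def matrix_vector_mult_def)

lemma synth_gram_entry [simp]: "(transpose (synth v) ** synth w) $ i $ j = v i \<bullet> w j"
  by (metis column_synth inner_column_column)

lemma sum_column_frame_operator:
  fixes A :: "real^'n::finite^'m::finite"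
  shows "(\<Sum>j\<in>UNIV. (column j A \<bullet> x) *\<^sub>R column j A) = (A ** transpose A) *v x"
  by (simp add: inner_column matrix_mult_sum[of A] scalar_mult_eq_scaleR
      matrix_vector_mul_assoc[symmetric] del: transpose_matrix_vector)

lemma synth_tight_iff:
  "synth v ** transpose (synth v) = c *\<^sub>R mat 1 \<longleftrightarrow> (\<forall>y. (\<Sum>i\<in>UNIV. (v i \<bullet> y) *\<^sub>R v i) = c *\<^sub>R y)"
  by (simp add: matrix_eq sum_column_frame_operator[of "synth v", simplified]
      scaleR_matrix_vector_assoc[symmetric])

lemma unit_tight_frame_constant:
  fixes v :: "'k::finite \<Rightarrow> real^'m::finite"
  assumes "\<And>i. norm (v i) = 1" and "synth v ** transpose (synth v) = c *\<^sub>R mat 1"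
  shows "real CARD('k) = c * real CARD('m)"
proof -
  have "real CARD('k) = trace (transpose (synth v) ** synth v)"
    using assms(1) by (simp add: trace_def dot_square_norm)
  also have "\<dots> = trace (c *\<^sub>R mat 1 :: real^'m^'m)"
    by (simp add: trace_mul_sym assms(2))
  also have "\<dots> = c * real CARD('m)"
    by (simp add: trace_def mat_def)
  finally show ?thesis .
qed

lemma tight_mult_transpose:
  fixes A :: "real^'n::finite^'k::finite" and B :: "real^'l::finite^'n"
  assumes "B ** transpose B = c *\<^sub>R mat 1"
  shows "(A ** B) ** transpose (A ** B) = c *\<^sub>R (A ** transpose A)"
  by (simp add: matrix_transpose_mul matrix_mul_assoc assms
      matrix_mul_assoc[of A B, symmetric] matrix_scalar_ac) (simp add: scalar_matrix_assoc)

lemma tight_frame_sum_inner_sq: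
  assumes "synth v ** transpose (synth v) = c *\<^sub>R mat 1"
  shows "(\<Sum>i\<in>UNIV. (v i \<bullet> y)\<^sup>2) = c * (norm y)\<^sup>2"
proof -
  have "(\<Sum>i\<in>UNIV. (v i \<bullet> y)\<^sup>2) = y \<bullet> (\<Sum>i\<in>UNIV. (v i \<bullet> y) *\<^sub>R v i)"
    by (simp add: inner_sum_right power2_eq_square inner_commute)
  also have "\<dots> = c * (norm y)\<^sup>2"
    using assms by (simp add: synth_tight_iff power2_norm_eq_inner)
  finally show ?thesis .
qed

lemma ETF_inner_abs_Welch:
  fixes v :: "'k::finite \<Rightarrow> real^'m::finite"
  assumes "is_ETF v" and "i \<noteq> j"
  shows "\<bar>v i \<bullet> v j\<bar> =
    sqrt ((real CARD('k) - real CARD('m)) / (real CARD('m) * (real CARD('k) - 1)))"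
proof -
  let ?k = "real CARD('k)" and ?m = "real CARD('m)"
  obtain c where unit: "\<And>i. norm (v i) = 1" and c: "\<And>i j. i \<noteq> j \<Longrightarrow> \<bar>v i \<bullet> v j\<bar> = c"
    and tight: "synth v ** transpose (synth v) = (?k / ?m) *\<^sub>R mat 1"
    using assms(1) unfolding is_ETF_def by blast
  have "?k / ?m = (\<Sum>x\<in>UNIV. (v x \<bullet> v i)\<^sup>2)"
    using tight_frame_sum_inner_sq[OF tight] unit by simp
  also have "\<dots> = (v i \<bullet> v i)\<^sup>2 + (\<Sum>x\<in>UNIV - {i}. (v x \<bullet> v i)\<^sup>2)"
    by (simp add: sum.remove)
  also have "\<dots> = 1 + (?k - 1) * c\<^sup>2"
  proof -
    have "(v x \<bullet> v i)\<^sup>2 = c\<^sup>2" if "x \<in> UNIV - {i}" for x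
      using c[of x i] that by (metis DiffD2 insertCI power2_abs)
    then show ?thesis
      using unit by (simp add: dot_square_norm card_Diff_singleton)
  qed
  finally have "?k / ?m = 1 + (?k - 1) * c\<^sup>2" .
  moreover have "?k > 1"
    using card_mono[of UNIV "{i, j}"] assms(2) by simp
  ultimately have "c\<^sup>2 = (?k - ?m) / (?m * (?k - 1))"
    by (simp add: field_simps)
  then show ?thesis
    using c[OF assms(2)] by (metis abs_ge_zero real_sqrt_abs abs_of_nonneg)
qed

lemma mutually_unbiased_inner_sq:
  fixes v :: "'k::finite \<Rightarrow> real^'m::finite" and w :: "'l::finite \<Rightarrow> real^'m"
  assumes "synth v ** transpose (synth v) = (real CARD('k) / real CARD('m)) *\<^sub>R mat 1"
    and "\<And>j. norm (w j) = 1" and "mutually_unbiased v w"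
  shows "(v i \<bullet> w j)\<^sup>2 = 1 / real CARD('m)"
proof -
  obtain c where c: "\<And>i j. \<bar>v i \<bullet> w j\<bar> = c"
    using assms(3) unfolding mutually_unbiased_def by blast
  have sq: "(v i' \<bullet> w j')\<^sup>2 = c\<^sup>2" for i' j'
    using c power2_abs by metis
  have "real CARD('k) / real CARD('m) = (\<Sum>i\<in>UNIV. (v i \<bullet> w j)\<^sup>2)"
    using tight_frame_sum_inner_sq[OF assms(1)] assms(2) by simp
  also have "\<dots> = real CARD('k) * c\<^sup>2"
    by (simp add: sq)
  finally show ?thesis
    by (simp add: sq field_simps)
qed

lemma rank_scaleR:
  fixes A :: "real^'n::finite^'m::finite"
  assumes "c \<noteq> 0"
  shows "rank (c *\<^sub>R A) = rank A"
proof -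
  have scale: "(c *\<^sub>R A) *v x = A *v (c *\<^sub>R x)" for x
    by (simp add: matrix_scaleR_vector_ac)
  have "range ((*v) (c *\<^sub>R A)) = range ((*v) A)"
  proof (intro equalityI image_subsetI)
    show "(c *\<^sub>R A) *v x \<in> range ((*v) A)" for x
      unfolding scale by (rule rangeI)
    show "A *v x \<in> range ((*v) (c *\<^sub>R A))" for x
    proof -
      have "(c *\<^sub>R A) *v (x /\<^sub>R c) = A *v x"
        using scale[of "x /\<^sub>R c"] assms by simp
      then show ?thesis
        by (metis rangeI)
    qed
  qed
  then show ?thesis
    by (simp add: rank_dim_range)
qed

definition scaled_cross_gram :: "('k::finite \<Rightarrow> real^'m::finite) \<Rightarrow> ('l::finite \<Rightarrow> real^'m) \<Rightarrow> real^'l^'k"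
  where "scaled_cross_gram v w = sqrt (real CARD('m)) *\<^sub>R (transpose (synth v) ** synth w)"

lemma scaled_cross_gram_entry:
  "scaled_cross_gram v w $ i $ j = sqrt (real CARD('m::finite)) * (v i \<bullet> (w j :: real^'m))"
  by (simp add: scaled_cross_gram_def)

lemma scaled_cross_gram_sign:
  fixes v :: "'k::finite \<Rightarrow> real^'m::finite" and w :: "'l::finite \<Rightarrow> real^'m"
  assumes "is_ETF v" and "is_ETF w" and "mutually_unbiased v w"
  shows "scaled_cross_gram v w $ i $ j = 1 \<or> scaled_cross_gram v w $ i $ j = -1"
proof -
  have "(v i \<bullet> w j)\<^sup>2 = 1 / real CARD('m)"
    using assms by (intro mutually_unbiased_inner_sq) (auto simp: is_ETF_def)
  then have "(scaled_cross_gram v w $ i $ j)\<^sup>2 = 1"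
    by (simp add: scaled_cross_gram_entry power_mult_distrib)
  then show ?thesis
    by (simp add: power2_eq_1_iff)
qed

lemma scaled_cross_gram_mult_transpose:
  fixes v :: "'k::finite \<Rightarrow> real^'m::finite" and w :: "'l::finite \<Rightarrow> real^'m"
  assumes "synth w ** transpose (synth w) = (real CARD('l) / real CARD('m)) *\<^sub>R mat 1"
  shows "scaled_cross_gram v w ** transpose (scaled_cross_gram v w) =
    real CARD('l) *\<^sub>R (transpose (synth v) ** synth v)"
  using tight_mult_transpose[OF assms, of "transpose (synth v)"]
  by (simp add: scaled_cross_gram_def transpose_scalar matrix_scalar_ac scalar_matrix_assoc[symmetric])

lemma scaled_cross_gram_cube:
  fixes v :: "'k::finite \<Rightarrow> real^'m::finite" and w :: "'l::finite \<Rightarrow> real^'m"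
  assumes "synth v ** transpose (synth v) = (real CARD('k) / real CARD('m)) *\<^sub>R mat 1"
    and "synth w ** transpose (synth w) = (real CARD('l) / real CARD('m)) *\<^sub>R mat 1"
  shows "scaled_cross_gram v w ** transpose (scaled_cross_gram v w) ** scaled_cross_gram v w =
    (real CARD('k) * real CARD('l) / real CARD('m)) *\<^sub>R scaled_cross_gram v w"
proof -
  let ?V = "synth v" and ?W = "synth w" and ?m = "real CARD('m)"
  have "scaled_cross_gram v w ** transpose (scaled_cross_gram v w) ** scaled_cross_gram v w =
      real CARD('l) *\<^sub>R (transpose ?V ** ?V) ** (sqrt ?m *\<^sub>R (transpose ?V ** ?W))"
    by (subst scaled_cross_gram_mult_transpose[OF assms(2)]) (simp add: scaled_cross_gram_def)
  also have "\<dots> = (real CARD('l) * sqrt ?m) *\<^sub>R (transpose ?V ** (?V ** transpose ?V) ** ?W)"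
    by (simp add: matrix_mul_assoc matrix_scalar_ac scalar_matrix_assoc[symmetric])
  also have "\<dots> = (real CARD('k) * real CARD('l) / ?m) *\<^sub>R scaled_cross_gram v w"
    by (simp add: assms(1) scaled_cross_gram_def matrix_scalar_ac scalar_matrix_assoc[symmetric])
  finally show ?thesis .
qed

lemma rank_scaled_cross_gram:
  fixes v :: "'k::finite \<Rightarrow> real^'m::finite" and w :: "'l::finite \<Rightarrow> real^'m"
  assumes "synth v ** transpose (synth v) = c *\<^sub>R mat 1" and "c \<noteq> 0"
    and "synth w ** transpose (synth w) = d *\<^sub>R mat 1" and "d \<noteq> 0"
  shows "rank (scaled_cross_gram v w) = CARD('m)"
proof -
  let ?D = "transpose (synth v) ** synth w"
  have upper: "rank ?D \<le> CARD('m)"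
    using rank_mul_le_right[of "transpose (synth v)" "synth w"] rank_bound[of "synth w"] by simp
  have "synth v ** ?D ** transpose (synth w) = (c * d) *\<^sub>R mat 1"
    by (simp add: matrix_mul_assoc assms(1,3) matrix_scalar_ac scalar_matrix_assoc[symmetric])
  then have "CARD('m) = rank (synth v ** ?D ** transpose (synth w))"
    using assms(2,4) by (simp add: rank_scaleR rank_I)
  also have "\<dots> \<le> rank (synth v ** ?D)"
    by (rule rank_mul_le_left)
  also have "\<dots> \<le> rank ?D"
    by (rule rank_mul_le_right)
  finally have "rank ?D = CARD('m)"
    using upper by simp
  then show ?thesis
    by (simp add: scaled_cross_gram_def rank_scaleR)
qed

lemma transpose_scaled_cross_gram:
  "transpose (scaled_cross_gram v w) = scaled_cross_gram w v"
  by (simp add: scaled_cross_gram_def transpose_scalar matrix_transpose_mul)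

lemma scaled_cross_gram_offdiag:
  fixes v :: "'k::finite \<Rightarrow> real^'m::finite" and w :: "'l::finite \<Rightarrow> real^'m"
  assumes "is_ETF v" and "is_ETF w" and "i \<noteq> i'"
  shows "\<bar>(scaled_cross_gram v w ** transpose (scaled_cross_gram v w)) $ i $ i'\<bar> =
    real CARD('l) * sqrt ((real CARD('k) - real CARD('m)) / (real CARD('m) * (real CARD('k) - 1)))"
  using assms(2) unfolding is_ETF_def
  by (simp add: scaled_cross_gram_mult_transpose ETF_inner_abs_Welch[OF assms(1,3)] abs_mult)

lemma transpose_mult_scaled_cross_gram_offdiag:
  fixes v :: "'k::finite \<Rightarrow> real^'m::finite" and w :: "'l::finite \<Rightarrow> real^'m"
  assumes "is_ETF v" and "is_ETF w" and "j \<noteq> j'"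
  shows "\<bar>(transpose (scaled_cross_gram v w) ** scaled_cross_gram v w) $ j $ j'\<bar> =
    real CARD('k) * sqrt ((real CARD('l) - real CARD('m)) / (real CARD('m) * (real CARD('l) - 1)))"
proof -
  have "transpose (scaled_cross_gram v w) ** scaled_cross_gram v w =
      scaled_cross_gram w v ** transpose (scaled_cross_gram w v)"
    by (simp add: transpose_scaled_cross_gram)
  then show ?thesis
    using scaled_cross_gram_offdiag[OF assms(2,1,3)] by simp
qed

definition unbiased_sign_matrix :: "real^'l::finite^'k::finite \<Rightarrow> nat \<Rightarrow> bool" where
  "unbiased_sign_matrix X r \<longleftrightarrow>
     (\<forall>i j. X $ i $ j = 1 \<or> X $ i $ j = -1) \<and>
     (\<exists>a. X ** transpose X ** X = a *\<^sub>R X) \<and>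
     (\<exists>c. \<forall>i i'. i \<noteq> i' \<longrightarrow> \<bar>(X ** transpose X) $ i $ i'\<bar> = c) \<and>
     (\<exists>c. \<forall>j j'. j \<noteq> j' \<longrightarrow> \<bar>(transpose X ** X) $ j $ j'\<bar> = c) \<and>
     rank X = r"

lemma unbiased_sign_matrix_scaled_cross_gram:
  fixes v :: "'k::finite \<Rightarrow> real^'m::finite" and w :: "'l::finite \<Rightarrow> real^'m"
  assumes ETF: "is_ETF v" "is_ETF w" and mu: "mutually_unbiased v w"
  shows "unbiased_sign_matrix (scaled_cross_gram v w) CARD('m)"
proof -
  have tight: "synth v ** transpose (synth v) = (real CARD('k) / real CARD('m)) *\<^sub>R mat 1"
    "synth w ** transpose (synth w) = (real CARD('l) / real CARD('m)) *\<^sub>R mat 1"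
    using ETF by (simp_all add: is_ETF_def)
  show ?thesis
    unfolding unbiased_sign_matrix_def
    using scaled_cross_gram_sign[OF ETF mu] scaled_cross_gram_cube[OF tight]
      scaled_cross_gram_offdiag[OF ETF] transpose_mult_scaled_cross_gram_offdiag[OF ETF]
      rank_scaled_cross_gram[OF tight(1) _ tight(2)]
    by (intro conjI exI allI impI) auto
qed

lemma column_matrix_mult: "column i (A ** B) = A *v column i (B :: real^'n::finite^'k::finite)"
  by (simp add: matrix_vector_mult_basis[symmetric] matrix_vector_mul_assoc)

lemma isometry_subspace_onto_UNIV:
  fixes S :: "(real^'n::finite) set"
  assumes "subspace S" and "dim S = CARD('m::finite)"
  obtains f :: "real^'n \<Rightarrow> real^'m"
  where "linear f" and "f ` S = UNIV" and "\<And>x y. x \<in> S \<Longrightarrow> y \<in> S \<Longrightarrow> f x \<bullet> f y = x \<bullet> y"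
proof -
  obtain f :: "real^'n \<Rightarrow> real^'m" where lin: "linear f" and onto: "f ` S = UNIV"
    and norm: "\<And>x. x \<in> S \<Longrightarrow> norm (f x) = norm x"
    using isometry_subspaces[of S "UNIV :: (real^'m) set"] assms by auto
  have sq: "f z \<bullet> f z = z \<bullet> z" if "z \<in> S" for z
    using norm[OF that] by (simp add: dot_square_norm)
  have "f x \<bullet> f y = x \<bullet> y" if "x \<in> S" "y \<in> S" for x y
  proof -
    have "f (x + y) \<bullet> f (x + y) = (x + y) \<bullet> (x + y)"
      using that assms(1) by (simp add: sq subspace_add)
    then show ?thesis
      using that by (simp add: linear_add[OF lin] sq inner_add inner_commute)
  qed
  with lin onto show ?thesis
    using that by blast
qed

lemma is_ETF_isometric_image:
  fixes f :: "real^'n::finite \<Rightarrow> real^'m::finite" and x :: "'k::finite \<Rightarrow> real^'n"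
  assumes lin: "linear f" and onto: "f ` S = UNIV"
    and isom: "\<And>x y. x \<in> S \<Longrightarrow> y \<in> S \<Longrightarrow> f x \<bullet> f y = x \<bullet> y"
    and xS: "\<And>i. x i \<in> S" and unit: "\<And>i. norm (x i) = 1"
    and equi: "\<exists>c. \<forall>i j. i \<noteq> j \<longrightarrow> \<bar>x i \<bullet> x j\<bar> = c"
    and frame: "\<And>s. s \<in> S \<Longrightarrow> (\<Sum>i\<in>UNIV. (x i \<bullet> s) *\<^sub>R x i) = c *\<^sub>R s"
  shows "is_ETF (f \<circ> x)"
proof -
  have unit': "norm (f (x i)) = 1" for i
    using isom[OF xS xS, of i i] unit by (simp add: norm_eq_sqrt_inner)
  have "synth (f \<circ> x) ** transpose (synth (f \<circ> x)) = c *\<^sub>R mat 1"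
    unfolding synth_tight_iff
  proof
    fix y
    obtain s where s: "s \<in> S" "y = f s"
      using onto by (metis UNIV_I imageE)
    have "(\<Sum>i\<in>UNIV. ((f \<circ> x) i \<bullet> y) *\<^sub>R (f \<circ> x) i) = f (\<Sum>i\<in>UNIV. (x i \<bullet> s) *\<^sub>R x i)"
      using s by (simp add: isom xS linear_sum[OF lin] linear_scale[OF lin])
    also have "\<dots> = c *\<^sub>R y"
      using s by (simp add: frame linear_scale[OF lin])
    finally show "(\<Sum>i\<in>UNIV. ((f \<circ> x) i \<bullet> y) *\<^sub>R (f \<circ> x) i) = c *\<^sub>R y" .
  qed
  moreover have "c = real CARD('k) / real CARD('m)"
    using unit_tight_frame_constant[OF _ calculation] unit' by simp
  ultimately show ?thesis
    using equi unit' by (simp add: is_ETF_def isom xS)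
qed

lemma sign_matrix_gram_diag:
  fixes X :: "real^'l::finite^'k::finite"
  assumes "\<And>i j. X $ i $ j = 1 \<or> X $ i $ j = -1"
  shows "(X ** transpose X) $ i $ i = real CARD('l)"
    and "(transpose X ** X) $ j $ j = real CARD('k)"
proof -
  have sq: "X $ i $ j * X $ i $ j = 1" for i j
    using assms[of i j] by auto
  show "(X ** transpose X) $ i $ i = real CARD('l)" "(transpose X ** X) $ j $ j = real CARD('k)"
    by (simp_all add: matrix_matrix_mult_def transpose_def sq)
qed

lemma cubic_gram_square:
  fixes X :: "real^'l::finite^'k::finite"
  assumes "X ** transpose X ** X = a *\<^sub>R X"
  shows "(X ** transpose X) ** (X ** transpose X) = a *\<^sub>R (X ** transpose X)"
proof -
  have "(X ** transpose X) ** (X ** transpose X) = (X ** transpose X ** X) ** transpose X"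
    by (simp add: matrix_mul_assoc)
  then show ?thesis
    by (simp add: assms scalar_matrix_assoc)
qed

lemma cubic_gram_on_column_space:
  fixes X :: "real^'l::finite^'k::finite"
  assumes "X ** transpose X ** X = a *\<^sub>R X"
  shows "(X ** transpose X) *v (X *v y) = a *\<^sub>R (X *v y)"
  by (simp add: matrix_vector_mul_assoc assms scaleR_matrix_vector_assoc)

lemma transpose_gram [simp]:
  "transpose (X ** transpose X) = X ** transpose (X :: real^'l::finite^'k::finite)"
  by (simp add: matrix_transpose_mul)

lemma cubic_sign_matrix_scalar_pos:
  fixes X :: "real^'l::finite^'k::finite"
  assumes sign: "\<And>i j. X $ i $ j = 1 \<or> X $ i $ j = -1" and cube: "X ** transpose X ** X = a *\<^sub>R X"
  shows "a > 0"
proof -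
  let ?G = "X ** transpose X" and ?l = "real CARD('l)"
  obtain i :: 'k where True by blast
  have "a * ?l = (transpose ?G ** ?G) $ i $ i"
    by (simp add: cubic_gram_square[OF cube] sign_matrix_gram_diag[OF sign])
  also have "\<dots> = (norm (column i ?G))\<^sup>2"
    by (simp only: power2_norm_eq_inner inner_column_column)
  also have "\<dots> \<ge> (column i ?G $ i)\<^sup>2"
    by (metis abs_ge_zero power2_abs power_mono component_le_norm_cart)
  finally have "?l * ?l \<le> a * ?l"
    by (simp add: column_def sign_matrix_gram_diag[OF sign] power2_eq_square)
  moreover have "?l > 0"
    by simp
  ultimately show ?thesis
    by (metis less_le_trans mult_le_cancel_right_pos)
qed

lemma mutually_unbiased_ETFs_of_sign_matrix:
  fixes X :: "real^'l::finite^'k::finite"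
  assumes "unbiased_sign_matrix X CARD('m::finite)"
  shows "\<exists>(v :: 'k \<Rightarrow> real^'m) (w :: 'l \<Rightarrow> real^'m).
    is_ETF v \<and> is_ETF w \<and> mutually_unbiased v w"
proof -
  obtain a where sign: "\<And>i j. X $ i $ j = 1 \<or> X $ i $ j = -1"
    and cube: "X ** transpose X ** X = a *\<^sub>R X"
    and equi_rows: "\<exists>c. \<forall>i i'. i \<noteq> i' \<longrightarrow> \<bar>(X ** transpose X) $ i $ i'\<bar> = c"
    and equi_cols: "\<exists>c. \<forall>j j'. j \<noteq> j' \<longrightarrow> \<bar>(transpose X ** X) $ j $ j'\<bar> = c"
    and rank: "rank X = CARD('m)"
    using assms unfolding unbiased_sign_matrix_def by blast
  let ?G = "X ** transpose X" and ?k = "real CARD('k)" and ?l = "real CARD('l)"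
  define S where "S = range ((*v) X)"
  have S: "subspace S" "dim S = CARD('m)"
    using rank by (simp_all add: S_def rank_dim_range linear_subspace_image)
  obtain f :: "real^'k \<Rightarrow> real^'m" where lin: "linear f" and onto: "f ` S = UNIV"
    and isom: "\<And>x y. x \<in> S \<Longrightarrow> y \<in> S \<Longrightarrow> f x \<bullet> f y = x \<bullet> y"
    using isometry_subspace_onto_UNIV[OF S] by blast
  have a: "a > 0"
    by (rule cubic_sign_matrix_scalar_pos[OF sign cube])
  \<comment> \<open>\<open>?G /\<^sub>R a\<close> is the orthogonal projection onto \<open>S\<close>, so the columns of \<open>P\<close> are the
    normalised projections of the standard basis vectors\<close>
  define P where "P = (1 / sqrt (a * ?l)) *\<^sub>R ?G"
  define Y where "Y = (1 / sqrt ?k) *\<^sub>R X"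
  have PX: "P = X ** ((1 / sqrt (a * ?l)) *\<^sub>R transpose X)"
    by (simp add: P_def matrix_scalar_ac scalar_matrix_assoc)
  have PS: "column i P \<in> S" for i
    by (simp only: S_def PX column_matrix_mult rangeI)
  have YX: "Y = X ** ((1 / sqrt ?k) *\<^sub>R mat 1)"
    by (simp add: Y_def matrix_scalar_ac)
  have YS: "column j Y \<in> S" for j
    by (simp only: S_def YX column_matrix_mult rangeI)
  have PP: "transpose P ** P = (1 / ?l) *\<^sub>R ?G"
    using a by (simp add: P_def transpose_scalar cubic_gram_square[OF cube] matrix_scalar_ac
        scalar_matrix_assoc[symmetric])
  have PY: "transpose P ** Y = sqrt (a / (?k * ?l)) *\<^sub>R X"
    using a by (simp add: P_def Y_def transpose_scalar cube matrix_scalar_ac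
        scalar_matrix_assoc[symmetric] real_sqrt_divide real_sqrt_mult field_simps)
  have YY: "transpose Y ** Y = (1 / ?k) *\<^sub>R (transpose X ** X)"
    by (simp add: Y_def transpose_scalar matrix_scalar_ac scalar_matrix_assoc[symmetric])
  have PPt: "P ** transpose P = (1 / ?l) *\<^sub>R ?G"
    using a by (simp add: P_def transpose_scalar cubic_gram_square[OF cube] matrix_scalar_ac
        scalar_matrix_assoc[symmetric])
  have frame_P: "(\<Sum>i\<in>UNIV. (column i P \<bullet> s) *\<^sub>R column i P) = (a / ?l) *\<^sub>R s"
    if "s \<in> S" for s
    using that unfolding sum_column_frame_operator PPt S_def
    by (auto simp: cubic_gram_on_column_space[OF cube] scaleR_matrix_vector_assoc[symmetric])
  have YYt: "Y ** transpose Y = (1 / ?k) *\<^sub>R ?G"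
    by (simp add: Y_def transpose_scalar matrix_scalar_ac scalar_matrix_assoc[symmetric])
  have frame_Y: "(\<Sum>j\<in>UNIV. (column j Y \<bullet> s) *\<^sub>R column j Y) = (a / ?k) *\<^sub>R s" if "s \<in> S" for s
    using that unfolding sum_column_frame_operator YYt S_def
    by (auto simp: cubic_gram_on_column_space[OF cube] scaleR_matrix_vector_assoc[symmetric])
  have "is_ETF (f \<circ> (\<lambda>i. column i P))"
  proof (rule is_ETF_isometric_image[OF lin onto isom PS _ _ frame_P])
    show "norm (column i P) = 1" for i
      using a by (simp add: norm_eq_sqrt_inner inner_column_column PP sign_matrix_gram_diag[OF sign])
    show "\<exists>c. \<forall>i i'. i \<noteq> i' \<longrightarrow> \<bar>column i P \<bullet> column i' P\<bar> = c"
      using equi_rows by (auto simp: inner_column_column PP abs_mult)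
  qed
  moreover have "is_ETF (f \<circ> (\<lambda>j. column j Y))"
  proof (rule is_ETF_isometric_image[OF lin onto isom YS _ _ frame_Y])
    show "norm (column j Y) = 1" for j
      by (simp add: norm_eq_sqrt_inner inner_column_column YY sign_matrix_gram_diag[OF sign])
    show "\<exists>c. \<forall>j j'. j \<noteq> j' \<longrightarrow> \<bar>column j Y \<bullet> column j' Y\<bar> = c"
      using equi_cols by (auto simp: inner_column_column YY abs_mult)
  qed
  moreover have "mutually_unbiased (f \<circ> (\<lambda>i. column i P)) (f \<circ> (\<lambda>j. column j Y))"
    unfolding mutually_unbiased_def
  proof (intro exI allI)
    fix i j
    have "\<bar>X $ i $ j\<bar> = 1"
      using sign[of i j] by auto
    then show "\<bar>(f \<circ> (\<lambda>i. column i P)) i \<bullet> (f \<circ> (\<lambda>j. column j Y)) j\<bar> = sqrt (a / (?k * ?l))"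
      using a by (simp add: isom PS YS inner_column_column PY abs_mult)
  qed
  ultimately show ?thesis
    by blast
qed

lemma Ints_matrix_mult:
  fixes A :: "real^'n::finite^'m::finite" and B :: "real^'p::finite^'n"
  assumes "\<forall>i j. A $ i $ j \<in> \<int>" and "\<forall>i j. B $ i $ j \<in> \<int>"
  shows "\<forall>i j. (A ** B) $ i $ j \<in> \<int>"
  using assms by (simp add: matrix_matrix_mult_def Ints_sum)

lemma exists_other_if_card_gt_1:
  assumes "CARD('a::finite) > 1"
  shows "\<exists>j::'a. j \<noteq> i"
proof (rule ccontr)
  assume "\<nexists>j::'a. j \<noteq> i"
  then have "(UNIV :: 'a set) = {i}"
    by auto
  then have "CARD('a) = card {i}"
    by (rule arg_cong)
  with assms show False
    by simp
qed

lemma mutually_unbiased_ETFs_integrality: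
  fixes v :: "'k::finite \<Rightarrow> real^'m::finite" and w :: "'l::finite \<Rightarrow> real^'m"
  assumes ETF: "is_ETF v" "is_ETF w" and mu: "mutually_unbiased v w"
    and card: "CARD('k) > 1" "CARD('l) > 1"
  shows "real CARD('k) * real CARD('l) / real CARD('m) \<in> \<int>"
    and "real CARD('k) * sqrt ((real CARD('l) - real CARD('m)) / (real CARD('m) * (real CARD('l) - 1))) \<in> \<int>"
    and "real CARD('l) * sqrt ((real CARD('k) - real CARD('m)) / (real CARD('m) * (real CARD('k) - 1))) \<in> \<int>"
proof -
  let ?X = "scaled_cross_gram v w"
  have sign: "?X $ i $ j = 1 \<or> ?X $ i $ j = -1" for i j
    by (rule scaled_cross_gram_sign[OF ETF mu])
  have "?X $ i $ j \<in> \<int>" for i j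
    using sign[of i j] by auto
  then have X: "\<forall>i j. ?X $ i $ j \<in> \<int>" and Xt: "\<forall>i j. transpose ?X $ i $ j \<in> \<int>"
    by (simp_all add: transpose_def)
  have G: "\<forall>i j. (?X ** transpose ?X) $ i $ j \<in> \<int>" and H: "\<forall>i j. (transpose ?X ** ?X) $ i $ j \<in> \<int>"
    using Ints_matrix_mult[OF X Xt] Ints_matrix_mult[OF Xt X] by blast+
  obtain i :: 'k and j :: 'l where True by blast
  have "real CARD('k) * real CARD('l) / real CARD('m) = (?X ** transpose ?X ** ?X) $ i $ j * ?X $ i $ j"
    using ETF sign[of i j] by (auto simp: is_ETF_def scaled_cross_gram_cube)
  then show "real CARD('k) * real CARD('l) / real CARD('m) \<in> \<int>"
    using Ints_matrix_mult[OF G X] X by simp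
  obtain i' where "i' \<noteq> i"
    using exists_other_if_card_gt_1[OF card(1)] by blast
  then have "\<bar>(?X ** transpose ?X) $ i' $ i\<bar> =
      real CARD('l) * sqrt ((real CARD('k) - real CARD('m)) / (real CARD('m) * (real CARD('k) - 1)))"
    by (rule scaled_cross_gram_offdiag[OF ETF])
  then show "real CARD('l) * sqrt ((real CARD('k) - real CARD('m)) / (real CARD('m) * (real CARD('k) - 1))) \<in> \<int>"
    using G by (metis Ints_abs)
  obtain j' where "j' \<noteq> j"
    using exists_other_if_card_gt_1[OF card(2)] by blast
  then have "\<bar>(transpose ?X ** ?X) $ j' $ j\<bar> =
      real CARD('k) * sqrt ((real CARD('l) - real CARD('m)) / (real CARD('m) * (real CARD('l) - 1)))"
    by (rule transpose_mult_scaled_cross_gram_offdiag[OF ETF])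
  then show "real CARD('k) * sqrt ((real CARD('l) - real CARD('m)) / (real CARD('m) * (real CARD('l) - 1))) \<in> \<int>"
    using H by (metis Ints_abs)
qed

theorem proposition2:
  assumes "CARD('m::finite) > 1"
    and "CARD('k::finite) \<ge> CARD('m)"
    and "CARD('l::finite) \<ge> CARD('m)"
  shows "((\<exists>(v :: 'k \<Rightarrow> real^'m) (w :: 'l \<Rightarrow> real^'m).
              is_ETF v \<and> is_ETF w \<and> mutually_unbiased v w)
          \<longleftrightarrow>
          (\<exists>X :: real^'l^'k.
              (\<forall>i j. X $ i $ j = 1 \<or> X $ i $ j = -1) \<and>
              (\<exists>a. X ** transpose X ** X = a *\<^sub>R X) \<and>
              (\<exists>c. \<forall>i i'. i \<noteq> i' \<longrightarrow> \<bar>(X ** transpose X) $ i $ i'\<bar> = c) \<and>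
              (\<exists>c. \<forall>j j'. j \<noteq> j' \<longrightarrow> \<bar>(transpose X ** X) $ j $ j'\<bar> = c) \<and>
              rank X = CARD('m)))
       \<and> ((\<exists>(v :: 'k \<Rightarrow> real^'m) (w :: 'l \<Rightarrow> real^'m).
              is_ETF v \<and> is_ETF w \<and> mutually_unbiased v w) \<longrightarrow>
            (let k = real CARD('k); l = real CARD('l); m = real CARD('m) in
              k * l / m \<in> \<int> \<and>
              k * sqrt ((l - m) / (m * (l - 1))) \<in> \<int> \<and>
              l * sqrt ((k - m) / (m * (k - 1))) \<in> \<int>))"
proof -
  let ?MU = "\<exists>(v :: 'k \<Rightarrow> real^'m) (w :: 'l \<Rightarrow> real^'m).
    is_ETF v \<and> is_ETF w \<and> mutually_unbiased v w"
  have card: "CARD('k) > 1" "CARD('l) > 1"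
    using assms by linarith+
  have "?MU \<longleftrightarrow> (\<exists>X :: real^'l^'k. unbiased_sign_matrix X CARD('m))"
    using unbiased_sign_matrix_scaled_cross_gram mutually_unbiased_ETFs_of_sign_matrix by blast
  moreover have "?MU \<longrightarrow> (let k = real CARD('k); l = real CARD('l); m = real CARD('m) in
      k * l / m \<in> \<int> \<and> k * sqrt ((l - m) / (m * (l - 1))) \<in> \<int> \<and> l * sqrt ((k - m) / (m * (k - 1))) \<in> \<int>)"
    using mutually_unbiased_ETFs_integrality[OF _ _ _ card] by (auto simp: Let_def)
  ultimately show ?thesis
    unfolding unbiased_sign_matrix_def by blast
qed

end
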